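(* Let $K>1$, $M\ge1$, and define $\tilde{\bm{\psi}}^M:\mathbb{R}^{K+M}\to\mathbb{R}^{K+M}$ by $$\tilde{\psi}^M_y(\bm{u})=\frac{\exp(u_y)}{\sum_{y'=1}^K\exp(u_{y'})}\ \ (1\le y\le K),\qquad \tilde{\psi}^M_y(\bm{u})=\frac{\exp(u_y)}{\sum_{y'=1}^{K}\exp(u_{y'})+\exp(u_y)-\max_{y'\in\{1,\dots,K\}}\exp(u_{y'})}\ \ (K+1\le y\le K+M).$$ Then for every $\bm{u}\in\mathbb{R}^{K+M}$: (i) $\tilde{\bm{\psi}}^M(\bm{u})\in\Delta^K\times[0,1]^M$; (ii) $\mathop{\rm argmax}_{y\in\{1,\dots,K+M\}}\tilde{\psi}^M_y(\bm{u})=\mathop{\rm argmax}_{y\in\{1,\dots,K+M\}}u_y$.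
   Context: $\Delta^K$ is the probability simplex in $\mathbb{R}^K$; $\Delta^K\times[0,1]^M$ means the first $K$ coordinates lie in $\Delta^K$ and each of the last $M$ lies in $[0,1]$. This is the multi-expert version of the asymmetric softmax, with one extra coordinate per expert. *)

theory Defs
  imports Complex_Main
begin

text \<open>Vectors in R^(K+M) are functions nat => real, indexed by {1..K+M}.\<close>

definition asym_softmax :: "nat \<Rightarrow> nat \<Rightarrow> (nat \<Rightarrow> real) \<Rightarrow> nat \<Rightarrow> real" where
  "asym_softmax K M u y =
     (if y \<le> K then exp (u y) / (\<Sum>y'=1..K. exp (u y'))
      else exp (u y) / ((\<Sum>y'=1..K. exp (u y')) + exp (u y) - (MAX y'\<in>{1..K}. exp (u y'))))"

definition in_simplex :: "nat \<Rightarrow> (nat \<Rightarrow> real) \<Rightarrow> bool" where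
  "in_simplex K p \<longleftrightarrow> (\<forall>y\<in>{1..K}. 0 \<le> p y) \<and> (\<Sum>y=1..K. p y) = 1"

definition argmax_set :: "'a set \<Rightarrow> ('a \<Rightarrow> real) \<Rightarrow> 'a set" where
  "argmax_set S f = {y \<in> S. \<forall>y'\<in>S. f y' \<le> f y}"

end

theory Submission
  imports Defs
begin

text \<open>
  Write \<open>m\<close> for the largest of \<open>exp u\<^sub>1, \<dots>, exp u\<^sub>K\<close> and \<open>c\<close> for the sum of the others,
  so that \<open>c > 0\<close> as soon as \<open>K > 1\<close>. The first \<open>K\<close> coordinates are \<open>exp u\<^sub>y / (c + m)\<close>, the
  others \<open>F u\<^sub>y\<close> with the strictly increasing \<open>F t = exp t / (c + exp t)\<close>. Since \<open>exp u\<^sub>y \<le> m\<close>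
  for \<open>y \<le> K\<close>, every coordinate satisfies \<open>\<psi>\<^sub>y \<le> F u\<^sub>y\<close>, with equality whenever \<open>u\<^sub>y\<close> is maximal.
  This sandwich forces the maximizers of \<open>\<psi>\<close> and of \<open>u\<close> to coincide.
\<close>

lemma argmax_set_nonempty:
  fixes f :: "'a \<Rightarrow> real"
  assumes "finite S" "S \<noteq> {}"
  shows "argmax_set S f \<noteq> {}"
proof -
  have "Max (f ` S) \<in> f ` S" using assms by simp
  then obtain y where "y \<in> S" "f y = Max (f ` S)" by force
  then have "y \<in> argmax_set S f"
    using assms(1) by (simp add: argmax_set_def)
  then show ?thesis by blast
qed

lemma argmax_set_eq_if_dominated:
  fixes f g :: "'a \<Rightarrow> real" and F :: "real \<Rightarrow> real"
  assumes "finite S" "S \<noteq> {}" "strict_mono F"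
    and dominated: "\<And>y. y \<in> S \<Longrightarrow> g y \<le> F (f y)"
    and tight: "\<And>y. y \<in> argmax_set S f \<Longrightarrow> g y = F (f y)"
  shows "argmax_set S g = argmax_set S f"
proof -
  obtain w where w: "w \<in> argmax_set S f"
    using argmax_set_nonempty[OF assms(1,2)] by blast
  have F_mono: "F a \<le> F b \<longleftrightarrow> a \<le> b" for a b
    using \<open>strict_mono F\<close> by (simp add: strict_mono_less_eq)
  have g_le: "g z \<le> g w" if "z \<in> S" for z
  proof -
    have "g z \<le> F (f z)" using dominated[OF that] .
    also have "\<dots> \<le> F (f w)" using w that by (simp add: F_mono argmax_set_def)
    also have "\<dots> = g w" using tight[OF w] by simp
    finally show ?thesis .
  qed
  show ?thesis
  proof (intro equalityI subsetI)
    fix y assume y: "y \<in> argmax_set S g"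
    then have "F (f w) \<le> F (f y)"
      using tight[OF w] dominated[of y] w by (force simp: argmax_set_def)
    then show "y \<in> argmax_set S f"
      using y w by (force simp: F_mono argmax_set_def)
  next
    fix y assume y: "y \<in> argmax_set S f"
    then have "g w = g y"
      using g_le w tight[OF y] tight[OF w] by (force simp: argmax_set_def)
    then show "y \<in> argmax_set S g"
      using y g_le by (simp add: argmax_set_def)
  qed
qed

lemma Max_image_less_sum:
  fixes f :: "'a \<Rightarrow> real"
  assumes "finite A" "a \<in> A" "b \<in> A" "a \<noteq> b" "\<And>x. x \<in> A \<Longrightarrow> 0 < f x"
  shows "Max (f ` A) < sum f A"
proof -
  have "Max (f ` A) \<in> f ` A" using assms(1,2) by (intro Max_in) auto
  then obtain j where j: "j \<in> A" "f j = Max (f ` A)" by force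
  have "0 < sum f (A - {j})"
    using assms j(1) by (intro sum_pos) auto
  then show ?thesis
    using sum.remove[OF assms(1) j(1), of f] j(2) by simp
qed

lemma strict_mono_exp_over_shifted_exp:
  fixes c :: real
  assumes "0 < c"
  shows "strict_mono (\<lambda>t. exp t / (c + exp t))"
proof (rule strict_monoI)
  fix s t :: real assume "s < t"
  then have "c * exp s < c * exp t" using assms by simp
  then show "exp s / (c + exp s) < exp t / (c + exp t)"
    using assms by (simp add: divide_simps add_pos_pos algebra_simps)
qed

definition exp_sum_but_max :: "nat \<Rightarrow> (nat \<Rightarrow> real) \<Rightarrow> real" where
  "exp_sum_but_max K u = (\<Sum>y=1..K. exp (u y)) - (MAX y\<in>{1..K}. exp (u y))"

lemma exp_le_Max:
  fixes u :: "nat \<Rightarrow> real"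
  shows "y \<in> {1..K} \<Longrightarrow> exp (u y) \<le> (MAX y'\<in>{1..K}. exp (u y'))"
  by (intro Max_ge) auto

lemma exp_sum_but_max_nonneg:
  assumes "1 \<le> K"
  shows "0 \<le> exp_sum_but_max K u"
proof -
  have "(MAX y\<in>{1..K}. exp (u y)) \<in> (\<lambda>y. exp (u y)) ` {1..K}"
    using assms by simp
  then obtain j where j: "j \<in> {1..K}" "exp (u j) = (MAX y\<in>{1..K}. exp (u y))" by force
  have "exp (u j) \<le> (\<Sum>y=1..K. exp (u y))"
    using j(1) by (intro member_le_sum) auto
  then show ?thesis using j(2) by (simp add: exp_sum_but_max_def)
qed

lemma exp_sum_but_max_pos:
  assumes "1 < K"
  shows "0 < exp_sum_but_max K u"
  using Max_image_less_sum[of "{1..K}" 1 2 "\<lambda>y. exp (u y)"] assms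
  by (simp add: exp_sum_but_max_def)

lemma asym_softmax_extra:
  assumes "K < y"
  shows "asym_softmax K M u y = exp (u y) / (exp_sum_but_max K u + exp (u y))"
  using assms by (simp add: asym_softmax_def exp_sum_but_max_def algebra_simps)

lemma in_simplex_asym_softmax:
  assumes "1 \<le> K"
  shows "in_simplex K (asym_softmax K M u)"
proof -
  have pos: "0 < (\<Sum>y=1..K. exp (u y))"
    using assms by (intro sum_pos) auto
  then have "(\<Sum>y=1..K. exp (u y) / (\<Sum>y=1..K. exp (u y))) = 1"
    by (simp add: sum_divide_distrib[symmetric])
  then show ?thesis
    using pos by (auto simp: in_simplex_def asym_softmax_def intro!: divide_nonneg_pos)
qed

lemma asym_softmax_extra_bounds:
  assumes "1 \<le> K" "K < y"
  shows "0 \<le> asym_softmax K M u y \<and> asym_softmax K M u y \<le> 1"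
  using exp_sum_but_max_nonneg[OF assms(1), of u] assms(2)
  by (simp add: asym_softmax_extra add_nonneg_pos)

lemma argmax_set_asym_softmax:
  assumes "1 < K"
  shows "argmax_set {1..K+M} (asym_softmax K M u) = argmax_set {1..K+M} u"
proof (rule argmax_set_eq_if_dominated)
  define c where "c = exp_sum_but_max K u"
  define m where "m = (MAX y\<in>{1..K}. exp (u y))"
  have c: "0 < c" using exp_sum_but_max_pos[OF assms] by (simp add: c_def)
  have first: "asym_softmax K M u y = exp (u y) / (c + m)" if "y \<le> K" for y
    using that by (simp add: asym_softmax_def c_def m_def exp_sum_but_max_def)
  let ?F = "\<lambda>t. exp t / (c + exp t)"
  show "strict_mono ?F" using strict_mono_exp_over_shifted_exp[OF c] .
  show "asym_softmax K M u y \<le> ?F (u y)" if "y \<in> {1..K+M}" for y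
  proof (cases "y \<le> K")
    case True
    then have "exp (u y) \<le> m" using that exp_le_Max by (simp add: m_def)
    then show ?thesis
      using True c by (simp add: first) (rule frac_le; simp add: add_pos_pos)
  qed (simp add: asym_softmax_extra c_def)
  show "asym_softmax K M u y = ?F (u y)" if "y \<in> argmax_set {1..K+M} u" for y
  proof (cases "y \<le> K")
    case True
    have y: "y \<in> {1..K}" "\<forall>z\<in>{1..K+M}. u z \<le> u y"
      using that True by (auto simp: argmax_set_def)
    have "m \<le> exp (u y)"
      unfolding m_def using y assms by (subst Max_le_iff) auto
    then have "exp (u y) = m"
      using exp_le_Max[OF y(1), of u] by (simp add: m_def)
    then show ?thesis using True by (simp add: first)
  qed (simp add: asym_softmax_extra c_def)
qed (use assms in auto)

theorem proposition2:
  fixes K M :: nat and u :: "nat \<Rightarrow> real"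
  assumes "K > 1" and "M \<ge> 1"
  shows "in_simplex K (asym_softmax K M u)
       \<and> (\<forall>y\<in>{K+1..K+M}. 0 \<le> asym_softmax K M u y \<and> asym_softmax K M u y \<le> 1)
       \<and> argmax_set {1..K+M} (asym_softmax K M u) = argmax_set {1..K+M} u"
  using assms(1) in_simplex_asym_softmax asym_softmax_extra_bounds argmax_set_asym_softmax
  by auto

end
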